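(* Let $G_H$ be a finite undirected multigraph (parallel edges allowed, no self-loops) with vertex set $V$ and edge set partitioned as $E = S \sqcup S^c$ into secure edges $S$ and insecure edges $S^c$, and let $0 < p_J^{S^c} \le p_J^{S} \le p_I$ be real costs satisfying $p_J^{S^c} \ge p_I/2$ and $p_J^{S} \ge p_I/2$. Consider the following two problems. (I-A) Find a cut $C^*$ of minimum cardinality among cuts $C$ with $n^S_C < |C|/2$; form the attack on $C^*$ that injects data into $\lfloor (1+|C^*|)/2\rfloor$ insecure edges of $C^*$, jams $(1 - (|C^*| \bmod 2))$ further insecure edges of $C^*$, and leaves all other edges untouched. (I-B) Give weight $p_J^{S}$ to secure edges and $p_I - p_J^{S}$ to insecure edges, and find a cut $C^*$ of minimum weight among cuts $C$ with $n^S_C \ge |C|/2$ and $n^{S^c}_C > 0$; form the attack on $C^*$ that injects data into all insecure edges of $C^*$ and jams $n^S_{C^*} + 1 - n^{S^c}_{C^*}$ secure edges of $C^*$. Then, among the attacks produced by those of the two problems that have a feasible solution, one of minimum cost is an optimal detectable generalized attack in $G_H$.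
   Context: For a nonempty proper subset $U \subsetneq V$, the cut $\delta(U)$ is the set of edges with exactly one endpoint in $U$; a cut of $G_H$ is any set of this form. For a cut $C$, $n^S_C = |C\cap S|$ and $n^{S^c}_C = |C \cap S^c|$. The costs are: $p_J^{S^c}$ per jammed insecure edge, $p_J^S$ per jammed secure edge, $p_I$ per insecure edge with injected data. A generalized attack is a triple $(C,J,I)$ where $C$ is a cut, $J \subseteq C$ is the set of jammed edges, and $I \subseteq (C \cap S^c)\setminus J$ is a nonempty set of injected edges; its cost is $p_J^{S}|J\cap S| + p_J^{S^c}|J \cap S^c| + p_I |I|$. The attack is detectable if $2|I| > |C \setminus J|$ (the injected edges form a strict majority of the non-jammed edges of the cut). An optimal detectable generalized attack is one of minimum cost among all detectable generalized attacks. *)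

theory Defs
  imports Complex_Main
begin

text \<open>Finite undirected multigraph: vertex set V, edge set E, each edge e has two
  distinct endpoints ep1 e and ep2 e (orientation irrelevant). Secure edges S \<subseteq> E,
  insecure edges E - S.\<close>

definition cut_of :: "'e set \<Rightarrow> ('e \<Rightarrow> 'v) \<Rightarrow> ('e \<Rightarrow> 'v) \<Rightarrow> 'v set \<Rightarrow> 'e set" where
  "cut_of E ep1 ep2 U = {e \<in> E. (ep1 e \<in> U) \<noteq> (ep2 e \<in> U)}"

definition is_cut :: "'v set \<Rightarrow> 'e set \<Rightarrow> ('e \<Rightarrow> 'v) \<Rightarrow> ('e \<Rightarrow> 'v) \<Rightarrow> 'e set \<Rightarrow> bool" where
  "is_cut V E ep1 ep2 C \<longleftrightarrow> (\<exists>U. U \<noteq> {} \<and> U \<subset> V \<and> C = cut_of E ep1 ep2 U)"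

type_synonym 'e attack = "'e set \<times> 'e set \<times> 'e set"

definition gen_attack ::
  "'v set \<Rightarrow> 'e set \<Rightarrow> ('e \<Rightarrow> 'v) \<Rightarrow> ('e \<Rightarrow> 'v) \<Rightarrow> 'e set \<Rightarrow> 'e attack \<Rightarrow> bool" where
  "gen_attack V E ep1 ep2 S a \<longleftrightarrow>
     (case a of (C, J, I) \<Rightarrow>
        is_cut V E ep1 ep2 C \<and> J \<subseteq> C \<and> I \<subseteq> (C \<inter> (E - S)) - J \<and> I \<noteq> {})"

definition attack_cost :: "'e set \<Rightarrow> 'e set \<Rightarrow> real \<Rightarrow> real \<Rightarrow> real \<Rightarrow> 'e attack \<Rightarrow> real" where
  "attack_cost E S pJS pJSc pI a =
     (case a of (C, J, I) \<Rightarrow>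
        pJS * real (card (J \<inter> S)) + pJSc * real (card (J \<inter> (E - S))) + pI * real (card I))"

definition detectable :: "'e attack \<Rightarrow> bool" where
  "detectable a \<longleftrightarrow> (case a of (C, J, I) \<Rightarrow> 2 * card I > card (C - J))"

definition optimal_detectable_attack ::
  "'v set \<Rightarrow> 'e set \<Rightarrow> ('e \<Rightarrow> 'v) \<Rightarrow> ('e \<Rightarrow> 'v) \<Rightarrow> 'e set \<Rightarrow> real \<Rightarrow> real \<Rightarrow> real
     \<Rightarrow> 'e attack \<Rightarrow> bool" where
  "optimal_detectable_attack V E ep1 ep2 S pJS pJSc pI a \<longleftrightarrow>
     gen_attack V E ep1 ep2 S a \<and> detectable a \<and>
     (\<forall>b. gen_attack V E ep1 ep2 S b \<and> detectable b \<longrightarrow>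
          attack_cost E S pJS pJSc pI a \<le> attack_cost E S pJS pJSc pI b)"

definition feasA :: "'v set \<Rightarrow> 'e set \<Rightarrow> ('e \<Rightarrow> 'v) \<Rightarrow> ('e \<Rightarrow> 'v) \<Rightarrow> 'e set \<Rightarrow> 'e set \<Rightarrow> bool" where
  "feasA V E ep1 ep2 S C \<longleftrightarrow> is_cut V E ep1 ep2 C \<and> 2 * card (C \<inter> S) < card C"

definition IA_output ::
  "'v set \<Rightarrow> 'e set \<Rightarrow> ('e \<Rightarrow> 'v) \<Rightarrow> ('e \<Rightarrow> 'v) \<Rightarrow> 'e set \<Rightarrow> 'e attack \<Rightarrow> bool" where
  "IA_output V E ep1 ep2 S a \<longleftrightarrow>
     (case a of (C, J, I) \<Rightarrow>
        feasA V E ep1 ep2 S C \<and>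
        (\<forall>C'. feasA V E ep1 ep2 S C' \<longrightarrow> card C \<le> card C') \<and>
        I \<subseteq> C \<inter> (E - S) \<and> card I = (1 + card C) div 2 \<and>
        J \<subseteq> C \<inter> (E - S) \<and> J \<inter> I = {} \<and> card J = 1 - card C mod 2)"

definition feasB :: "'v set \<Rightarrow> 'e set \<Rightarrow> ('e \<Rightarrow> 'v) \<Rightarrow> ('e \<Rightarrow> 'v) \<Rightarrow> 'e set \<Rightarrow> 'e set \<Rightarrow> bool" where
  "feasB V E ep1 ep2 S C \<longleftrightarrow> is_cut V E ep1 ep2 C \<and> card C \<le> 2 * card (C \<inter> S) \<and>
     card (C \<inter> (E - S)) > 0"

definition weightB :: "'e set \<Rightarrow> 'e set \<Rightarrow> real \<Rightarrow> real \<Rightarrow> 'e set \<Rightarrow> real" where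
  "weightB E S pJS pI C = pJS * real (card (C \<inter> S)) + (pI - pJS) * real (card (C \<inter> (E - S)))"

definition IB_output ::
  "'v set \<Rightarrow> 'e set \<Rightarrow> ('e \<Rightarrow> 'v) \<Rightarrow> ('e \<Rightarrow> 'v) \<Rightarrow> 'e set \<Rightarrow> real \<Rightarrow> real \<Rightarrow> 'e attack \<Rightarrow> bool" where
  "IB_output V E ep1 ep2 S pJS pI a \<longleftrightarrow>
     (case a of (C, J, I) \<Rightarrow>
        feasB V E ep1 ep2 S C \<and>
        (\<forall>C'. feasB V E ep1 ep2 S C' \<longrightarrow> weightB E S pJS pI C \<le> weightB E S pJS pI C') \<and>
        I = C \<inter> (E - S) \<and>
        J \<subseteq> C \<inter> S \<and>
        int (card J) = int (card (C \<inter> S)) + 1 - int (card (C \<inter> (E - S))))"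

end

theory Submission
  imports Defs
begin

(* Write j_S, j_Sc for the numbers of jammed secure and insecure edges of a detectable attack
  on a cut C and i for the number of injected edges. Detectability gives |C| < 2i + j_S + j_Sc,
  and injected and jammed insecure edges are disjoint, so i + j_Sc <= n^Sc_C. Since every jam
  costs at least p_I/2, if n^S_C < |C|/2 the cheapest way to meet the first bound is the
  attack of (I-A) on a cut of minimum cardinality. Otherwise n^S_C >= |C|/2, and eliminating
  j_S with the first bound and i with the second leaves
  cost >= p_J^S + p_J^S n^S_C + (p_I - p_J^S) n^Sc_C, which is attained by the attack of (I-B). *)

lemma is_cut_subset: "is_cut V E ep1 ep2 C \<Longrightarrow> C \<subseteq> E"
  unfolding is_cut_def cut_of_def by auto

lemma gen_attack_counts:
  assumes "finite E" and "gen_attack V E ep1 ep2 S (C, J, I)"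
  shows "finite C"
    and "card C = card (C \<inter> S) + card (C \<inter> (E - S))"
    and "card J = card (J \<inter> S) + card (J \<inter> (E - S))"
    and "card I + card (J \<inter> (E - S)) \<le> card (C \<inter> (E - S))"
    and "0 < card I"
proof -
  have cut: "is_cut V E ep1 ep2 C" and JC: "J \<subseteq> C" and IC: "I \<subseteq> C \<inter> (E - S) - J"
    and "I \<noteq> {}"
    using assms(2) unfolding gen_attack_def by auto
  have CE: "C \<subseteq> E" using is_cut_subset[OF cut] .
  show fC: "finite C" using CE assms(1) finite_subset by blast
  have fJ: "finite J" and fI: "finite I" using JC IC fC finite_subset by blast+
  have "C \<inter> (E - S) = C - S" "J \<inter> (E - S) = J - S" using CE JC by auto
  then show "card C = card (C \<inter> S) + card (C \<inter> (E - S))"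
    and "card J = card (J \<inter> S) + card (J \<inter> (E - S))"
    using card_Int_Diff fC fJ by metis+
  have "card I + card (J \<inter> (E - S)) = card (I \<union> J \<inter> (E - S))"
    using IC fI fJ by (subst card_Un_disjoint) auto
  also have "\<dots> \<le> card (C \<inter> (E - S))"
    using IC JC fC by (intro card_mono) auto
  finally show "card I + card (J \<inter> (E - S)) \<le> card (C \<inter> (E - S))" .
  show "0 < card I" using \<open>I \<noteq> {}\<close> fI by auto
qed

lemma gen_attack_feasA_or_feasB:
  assumes "finite E" and "gen_attack V E ep1 ep2 S (C, J, I)"
  shows "feasA V E ep1 ep2 S C \<or> feasB V E ep1 ep2 S C"
  using gen_attack_counts[OF assms] assms(2) unfolding gen_attack_def feasA_def feasB_def by auto

lemma detectable_card_bound: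
  assumes "finite C" and "J \<subseteq> C" and "detectable (C, J, I)"
  shows "card C < 2 * card I + card J"
proof -
  have "card (C - J) = card C - card J" "card J \<le> card C"
    using assms(1,2) card_Diff_subset finite_subset card_mono by metis+
  then show ?thesis using assms(3) unfolding detectable_def by simp
qed

lemma detectable_attack_counts:
  assumes "finite E" and "gen_attack V E ep1 ep2 S (C, J, I)" and "detectable (C, J, I)"
  shows "card C < 2 * card I + card (J \<inter> S) + card (J \<inter> (E - S))"
  using detectable_card_bound[OF gen_attack_counts(1)[OF assms(1,2)] _ assms(3)]
    gen_attack_counts(3)[OF assms(1,2)] assms(2)
  unfolding gen_attack_def by auto

lemma attack_cost_triple:
  "attack_cost E S pJS pJSc pI (C, J, I) =
     pJS * card (J \<inter> S) + pJSc * card (J \<inter> (E - S)) + pI * card I"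
  unfolding attack_cost_def by simp

text \<open>The cost formula of (I-A): an odd number 2k+1 of cut edges is outvoted by k+1
  injections, an even number 2k by k injections and one jam.\<close>

lemma half_injection_cost_le:
  fixes pI pJ :: real and n i j :: nat
  assumes "n < 2 * i + j" and "0 \<le> pI" and "pJ \<le> pI" and "pI \<le> 2 * pJ"
  shows "pI * ((1 + n) div 2) + pJ * (1 - n mod 2) \<le> pJ * j + pI * i"
proof (cases "even n")
  case True
  then obtain k where n: "n = 2 * k" by auto
  show ?thesis
  proof (cases "j = 0")
    case True
    then have "pI * (k + 1) \<le> pI * i" using assms(1,2) n by (intro mult_left_mono) auto
    with True n assms(3) show ?thesis by (simp add: algebra_simps)
  next
    case False
    have "pI * (2 * k) \<le> pI * (2 * i + (j - 1))"
      using assms(1,2) n False by (intro mult_left_mono) auto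
    moreover have "pI * (real j - 1) \<le> 2 * pJ * (real j - 1)"
      using assms(4) False by (intro mult_right_mono) auto
    ultimately show ?thesis using n False by (simp add: of_nat_diff algebra_simps)
  qed
next
  case False
  then obtain k where n: "n = 2 * k + 1" using oddE by blast
  have "pI * (2 * k + 2) \<le> pI * (2 * i + j)"
    using assms(1,2) n by (intro mult_left_mono) auto
  moreover have "pI * j \<le> 2 * pJ * j" using assms(4) by (intro mult_right_mono) auto
  moreover have "(1 + n) div 2 = k + 1" "n mod 2 = 1" using n by auto
  ultimately show ?thesis by (simp add: algebra_simps)
qed

lemma IA_output_attack:
  assumes "finite E" and "IA_output V E ep1 ep2 S a"
  shows "gen_attack V E ep1 ep2 S a" and "detectable a"
    and "attack_cost E S pJS pJSc pI a =
           pI * ((1 + card (fst a)) div 2) + pJSc * (1 - card (fst a) mod 2)"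
proof -
  obtain C J I where a: "a = (C, J, I)" by (cases a)
  have cut: "is_cut V E ep1 ep2 C" and lt: "2 * card (C \<inter> S) < card C"
    and I: "I \<subseteq> C \<inter> (E - S)" "card I = (1 + card C) div 2"
    and J: "J \<subseteq> C \<inter> (E - S)" "J \<inter> I = {}" "card J = 1 - card C mod 2"
    using assms(2) unfolding IA_output_def feasA_def a by auto
  have "I \<noteq> {}" using I(2) lt by auto
  then show "gen_attack V E ep1 ep2 S a" using cut I J unfolding gen_attack_def a by auto
  have "finite C" using is_cut_subset[OF cut] assms(1) finite_subset by blast
  then have "card (C - J) = card C - card J"
    using J(1) by (intro card_Diff_subset) (auto intro: finite_subset)
  then have "card (C - J) < 2 * card I" using I(2) J(3) lt by presburger
  then show "detectable a" unfolding detectable_def a by simp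
  have "J \<inter> S = {}" "J \<inter> (E - S) = J" using J(1) by auto
  then show "attack_cost E S pJS pJSc pI a =
               pI * ((1 + card (fst a)) div 2) + pJSc * (1 - card (fst a) mod 2)"
    using I(2) J(3) unfolding attack_cost_triple a by simp
qed

lemma IB_output_attack:
  assumes "finite E" and "IB_output V E ep1 ep2 S pJS pI b"
  shows "gen_attack V E ep1 ep2 S b" and "detectable b"
    and "attack_cost E S pJS pJSc pI b = pJS + weightB E S pJS pI (fst b)"
proof -
  obtain C J I where b: "b = (C, J, I)" by (cases b)
  have cut: "is_cut V E ep1 ep2 C" and "0 < card (C \<inter> (E - S))"
    and I: "I = C \<inter> (E - S)" and J: "J \<subseteq> C \<inter> S"
    and cJ: "int (card J) = int (card (C \<inter> S)) + 1 - int (card (C \<inter> (E - S)))"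
    using assms(2) unfolding IB_output_def feasB_def b by auto
  then have "I \<noteq> {}" by auto
  then show ga: "gen_attack V E ep1 ep2 S b" using cut I J unfolding gen_attack_def b by auto
  note counts = gen_attack_counts[OF assms(1) ga[unfolded b]]
  have "card (C - J) = card C - card J" and "card J \<le> card C"
    using J counts(1) by (auto intro: card_Diff_subset card_mono finite_subset)
  then have "card (C - J) < 2 * card I" using counts(2) cJ unfolding I by linarith
  then show "detectable b" unfolding detectable_def b by simp
  have "J \<inter> S = J" "J \<inter> (E - S) = {}" using J by auto
  then have cost: "attack_cost E S pJS pJSc pI b = pJS * card J + pI * card (C \<inter> (E - S))"
    unfolding attack_cost_triple b I by simp
  have rJ: "real (card J) = real (card (C \<inter> S)) + 1 - real (card (C \<inter> (E - S)))"
    using arg_cong[OF cJ, of real_of_int] by simp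
  show "attack_cost E S pJS pJSc pI b = pJS + weightB E S pJS pI (fst b)"
    unfolding cost unfolding rJ weightB_def b by (simp add: algebra_simps)
qed

lemma IA_output_cost_le:
  assumes "finite E" and "IA_output V E ep1 ep2 S a"
    and "gen_attack V E ep1 ep2 S (C, J, I)" and "detectable (C, J, I)"
    and "feasA V E ep1 ep2 S C" and "0 \<le> pI" and "pJSc \<le> pI" and "pI \<le> 2 * pJSc"
    and "pJSc \<le> pJS"
  shows "attack_cost E S pJS pJSc pI a \<le> attack_cost E S pJS pJSc pI (C, J, I)"
proof -
  have "card (fst a) \<le> card C"
    using assms(2,5) unfolding IA_output_def by (simp split: prod.splits)
  then have "attack_cost E S pJS pJSc pI a
      \<le> pJSc * (card (J \<inter> S) + card (J \<inter> (E - S))) + pI * card I"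
    unfolding IA_output_attack(3)[OF assms(1,2)]
    using detectable_attack_counts[OF assms(1,3,4)] assms(6-8)
    by (intro half_injection_cost_le) auto
  moreover have "pJSc * card (J \<inter> S) \<le> pJS * card (J \<inter> S)"
    using assms(9) by (intro mult_right_mono) auto
  ultimately show ?thesis unfolding attack_cost_triple by (simp add: algebra_simps)
qed

lemma weightB_cost_le:
  assumes "finite E" and "gen_attack V E ep1 ep2 S (C, J, I)" and "detectable (C, J, I)"
    and "pI \<le> pJSc + pJS" and "pI \<le> 2 * pJS" and "0 \<le> pJS"
  shows "pJS + weightB E S pJS pI C \<le> attack_cost E S pJS pJSc pI (C, J, I)"
proof -
  note counts = gen_attack_counts[OF assms(1,2)]
  have "real (card C) + 1 - 2 * real (card I) - real (card (J \<inter> (E - S))) \<le> card (J \<inter> S)"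
    using detectable_attack_counts[OF assms(1-3)] by linarith
  then have "pJS * (real (card C) + 1 - 2 * real (card I) - real (card (J \<inter> (E - S))))
      \<le> pJS * card (J \<inter> S)"
    using assms(6) by (rule mult_left_mono)
  moreover have "0 \<le> (2 * pJS - pI) * (card (C \<inter> (E - S)) - real (card I) - card (J \<inter> (E - S)))"
    using counts(4) assms(5) by simp
  moreover have "0 \<le> (pJSc + pJS - pI) * card (J \<inter> (E - S))"
    using assms(4) by simp
  ultimately show ?thesis
    unfolding attack_cost_triple weightB_def counts(2) by (simp add: algebra_simps)
qed

lemma IB_output_cost_le:
  assumes "finite E" and "IB_output V E ep1 ep2 S pJS pI b"
    and "gen_attack V E ep1 ep2 S (C, J, I)" and "detectable (C, J, I)"
    and "feasB V E ep1 ep2 S C" and "pI \<le> pJSc + pJS" and "pI \<le> 2 * pJS" and "0 \<le> pJS"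
  shows "attack_cost E S pJS pJSc pI b \<le> attack_cost E S pJS pJSc pI (C, J, I)"
proof -
  have "weightB E S pJS pI (fst b) \<le> weightB E S pJS pI C"
    using assms(2,5) unfolding IB_output_def by (simp split: prod.splits)
  then show ?thesis
    using IB_output_attack(3)[where pJSc = pJSc, OF assms(1,2)] weightB_cost_le[OF assms(1,3,4,6-8)]
    by linarith
qed

theorem theorem5:
  fixes V :: "'v set" and E S :: "'e set" and ep1 ep2 :: "'e \<Rightarrow> 'v"
    and pJS pJSc pI :: real and a b x :: "'e attack"
  assumes "finite V" and "finite E"
    and "\<forall>e\<in>E. ep1 e \<in> V \<and> ep2 e \<in> V \<and> ep1 e \<noteq> ep2 e"
    and "S \<subseteq> E"
    and "0 < pJSc" and "pJSc \<le> pJS" and "pJS \<le> pI"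
    and "pJSc \<ge> pI / 2" and "pJS \<ge> pI / 2"
    and "(\<exists>C. feasA V E ep1 ep2 S C) \<Longrightarrow> IA_output V E ep1 ep2 S a"
    and "(\<exists>C. feasB V E ep1 ep2 S C) \<Longrightarrow> IB_output V E ep1 ep2 S pJS pI b"
    and "((\<exists>C. feasA V E ep1 ep2 S C) \<and> x = a) \<or> ((\<exists>C. feasB V E ep1 ep2 S C) \<and> x = b)"
    and "(\<exists>C. feasA V E ep1 ep2 S C) \<Longrightarrow> attack_cost E S pJS pJSc pI x \<le> attack_cost E S pJS pJSc pI a"
    and "(\<exists>C. feasB V E ep1 ep2 S C) \<Longrightarrow> attack_cost E S pJS pJSc pI x \<le> attack_cost E S pJS pJSc pI b"
  shows "optimal_detectable_attack V E ep1 ep2 S pJS pJSc pI x"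
proof -
  have prices: "0 \<le> pI" "pI \<le> 2 * pJSc" "pI \<le> 2 * pJS" "pI \<le> pJSc + pJS"
    using assms(5-9) by linarith+
  have "gen_attack V E ep1 ep2 S x \<and> detectable x"
    using assms(12) IA_output_attack[OF assms(2,10)] IB_output_attack[OF assms(2,11)] by blast
  moreover have "attack_cost E S pJS pJSc pI x \<le> attack_cost E S pJS pJSc pI (C, J, I)"
    if c: "gen_attack V E ep1 ep2 S (C, J, I)" "detectable (C, J, I)" for C J I
  proof -
    consider "feasA V E ep1 ep2 S C" | "feasB V E ep1 ep2 S C"
      using gen_attack_feasA_or_feasB[OF assms(2) c(1)] by blast
    then show ?thesis
    proof cases
      case 1
      then have "attack_cost E S pJS pJSc pI a \<le> attack_cost E S pJS pJSc pI (C, J, I)"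
        using assms(6,7,10) prices by (intro IA_output_cost_le[OF assms(2) _ c]) auto
      with 1 show ?thesis using assms(13) by fastforce
    next
      case 2
      then have "attack_cost E S pJS pJSc pI b \<le> attack_cost E S pJS pJSc pI (C, J, I)"
        using assms(5,6,11) prices by (intro IB_output_cost_le[OF assms(2) _ c]) auto
      with 2 show ?thesis using assms(14) by fastforce
    qed
  qed
  ultimately show ?thesis unfolding optimal_detectable_attack_def by auto
qed

end
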